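(* Let $A\subset(0,1)^n$ be an open subanalytic cell which is prepared with center $0$ and such that $x_1,\dots,x_n$ are all asymptotically undetermined on $A$. Then there exists a sliver function for $A$, i.e. there exist $\epsilon\in(0,1)$ and real numbers $0<p_i<q_i$ ($i=2,\dots,n$) such that the map $\psi:(0,\epsilon)\times\prod_{i=2}^n(p_i,q_i)\to\mathbb{R}^n$, $\psi(t)=(t_1,t_1^{t_2},\dots,t_1^{t_n})$, has image contained in $A$.
   Context: "Subanalytic" means globally subanalytic (definable in the real field expanded by all restricted analytic functions). Analytic on a set = extends analytically to an open neighbourhood; analytic unit = analytic of constant nonzero sign. Subanalytic terms: finite compositions of restricted analytic functions, $+$, $\times$, and $t\mapsto t^r$ ($t\ge0$), $0$ ($t<0$), $r\in\mathbb{Q}$. An open subanalytic cell $A\subset(0,1)^n$: for each $i$, $\Pi_{i-1}(A)$ is quantifier-free definable from subanalytic terms with $=,<$, and $\Pi_i(A)=\{x_{\le i}:x_{<i}\in\Pi_{i-1}(A),\ a_i(x_{<i})<x_i<b_i(x_{<i})\}$ with $a_i<b_i$ analytic subanalytic terms (one-sided unbounded forms cannot occur inside $(0,1)^n$; for $i=1$, $a_1<b_1$ are constants). The zero tuple is a center, with coordinates $x$ themselves. A strong subanalytic unit on such a cell $A'\subset(0,1)^k$ with center $0$ is $U\circ\varphi$, $\varphi(x)=(x^{\beta_1},\dots,x^{\beta_N})$ bounded on $A'$, $\beta_j\in\mathbb{Q}^k$, $U$ an analytic unit on the closure of $\operatorname{im}\varphi$. $x_i$ is asymptotically determined on $A$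 if $b_i<Ca_i$ on $\Pi_{i-1}(A)$ for some $C>0$, asymptotically undetermined otherwise. For $J'$ a subset of the undetermined indices, inductively on $k$: for $k=0$ everything is $\emptyset$-prepared; for $k\ge1$, $A'$ is $J'$-prepared (with center $0$) if the family $\{a_k,b_k,b_k-a_k\}$ is $(J'\cap\{1,\dots,k-1\})$-prepared on $\Pi_{k-1}(A')$ with center $0$ and $0$ is in the closure of the image of $a_k$; a finite family of subanalytic functions on $A'$ is $J'$-prepared on $A'$ if $A'$ is and each member is $0$ on $A'$ or of the form $x^\alpha u(x)$ with $u$ a strong unit with center $0$ and $\alpha_i=0$ for $i\notin J'$. "Prepared" means $J'$-prepared with $J'$ the set of all asymptotically undetermined indices. *)

theory Defs
  imports "HOL-Analysis.Analysis"
begin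

text \<open>Points of R^m are represented as real lists of length m; coordinate x_i (1-based)
  is x ! (i-1).  Topological notions on R^m are made explicit via the sup-norm.\<close>

definition box_nbhd :: "nat \<Rightarrow> real list \<Rightarrow> real \<Rightarrow> real list set" where
  "box_nbhd m a r = {x. length x = m \<and> (\<forall>i<m. \<bar>x ! i - a ! i\<bar> < r)}"

definition open_n :: "nat \<Rightarrow> real list set \<Rightarrow> bool" where
  "open_n m V \<longleftrightarrow> V \<subseteq> {x. length x = m} \<and> (\<forall>a\<in>V. \<exists>r>0. box_nbhd m a r \<subseteq> V)"

definition closure_n :: "nat \<Rightarrow> real list set \<Rightarrow> real list set" where
  "closure_n m S = {y. length y = m \<and> (\<forall>e>0. \<exists>z\<in>S. \<forall>i<m. \<bar>y ! i - z ! i\<bar> < e)}"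

text \<open>Real analyticity on an open set V of R^m: locally the sum of an (absolutely, i.e.
  unconditionally) convergent power series indexed by multi-indices (lists of length m).\<close>
definition analytic_on_n :: "nat \<Rightarrow> real list set \<Rightarrow> (real list \<Rightarrow> real) \<Rightarrow> bool" where
  "analytic_on_n m V g \<longleftrightarrow> open_n m V \<and>
     (\<forall>a\<in>V. \<exists>r>0. \<exists>c :: nat list \<Rightarrow> real. box_nbhd m a r \<subseteq> V \<and>
        (\<forall>x\<in>box_nbhd m a r.
           ((\<lambda>\<alpha>. c \<alpha> * (\<Prod>i<m. (x ! i - a ! i) ^ (\<alpha> ! i))) has_sum g x) {\<alpha>. length \<alpha> = m}))"

definition analytic_set :: "nat \<Rightarrow> real list set \<Rightarrow> (real list \<Rightarrow> real) \<Rightarrow> bool" where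
  "analytic_set m S f \<longleftrightarrow> (\<exists>V g. open_n m V \<and> S \<subseteq> V \<and> analytic_on_n m V g \<and> (\<forall>x\<in>S. g x = f x))"

definition cube_n :: "nat \<Rightarrow> real list set" where
  "cube_n m = {x. length x = m \<and> (\<forall>i<m. -1 \<le> x ! i \<and> x ! i \<le> 1)}"

text \<open>Restricted analytic function in m variables (only its values on lists of length m matter).\<close>
definition restricted_analytic :: "nat \<Rightarrow> (real list \<Rightarrow> real) \<Rightarrow> bool" where
  "restricted_analytic m F \<longleftrightarrow> (\<exists>g. analytic_set m (cube_n m) g \<and>
      (\<forall>y. length y = m \<longrightarrow> F y = (if y \<in> cube_n m then g y else 0)))"

definition rpow :: "real \<Rightarrow> real \<Rightarrow> real" where
  "rpow r t = (if t < 0 then 0 else if t = 0 then (if r = 0 then 1 else 0) else t powr r)"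

text \<open>Subanalytic terms in n variables, as the functions they define.\<close>
inductive sa_term :: "nat \<Rightarrow> (real list \<Rightarrow> real) \<Rightarrow> bool" for n :: nat where
  var: "i < n \<Longrightarrow> sa_term n (\<lambda>x. x ! i)"
| const: "sa_term n (\<lambda>x. c)"
| comp: "restricted_analytic m F \<Longrightarrow> (\<forall>j<m. sa_term n (ts j)) \<Longrightarrow>
           sa_term n (\<lambda>x. F (map (\<lambda>j. ts j x) [0..<m]))"
| add: "sa_term n s \<Longrightarrow> sa_term n t \<Longrightarrow> sa_term n (\<lambda>x. s x + t x)"
| mult: "sa_term n s \<Longrightarrow> sa_term n t \<Longrightarrow> sa_term n (\<lambda>x. s x * t x)"
| pow: "sa_term n t \<Longrightarrow> r \<in> \<rat> \<Longrightarrow> sa_term n (\<lambda>x. rpow r (t x))"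

inductive qf_formula :: "nat \<Rightarrow> (real list \<Rightarrow> bool) \<Rightarrow> bool" for n :: nat where
  eq: "sa_term n s \<Longrightarrow> sa_term n t \<Longrightarrow> qf_formula n (\<lambda>x. s x = t x)"
| less: "sa_term n s \<Longrightarrow> sa_term n t \<Longrightarrow> qf_formula n (\<lambda>x. s x < t x)"
| neg: "qf_formula n P \<Longrightarrow> qf_formula n (\<lambda>x. \<not> P x)"
| conj: "qf_formula n P \<Longrightarrow> qf_formula n Q \<Longrightarrow> qf_formula n (\<lambda>x. P x \<and> Q x)"

definition qf_definable :: "nat \<Rightarrow> real list set \<Rightarrow> bool" where
  "qf_definable m S \<longleftrightarrow> (\<exists>P. qf_formula m P \<and> S = {x. length x = m \<and> P x})"

definition proj :: "nat \<Rightarrow> real list set \<Rightarrow> real list set" where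
  "proj i A = take i ` A"

definition open_sa_cell :: "nat \<Rightarrow> real list set \<Rightarrow> (nat \<Rightarrow> real list \<Rightarrow> real) \<Rightarrow>
    (nat \<Rightarrow> real list \<Rightarrow> real) \<Rightarrow> bool" where
  "open_sa_cell n A a b \<longleftrightarrow> A \<noteq> {} \<and>
     A \<subseteq> {x. length x = n \<and> (\<forall>i<n. 0 < x ! i \<and> x ! i < 1)} \<and>
     (\<forall>i\<in>{1..n}.
        qf_definable (i - 1) (proj (i - 1) A) \<and>
        sa_term (i - 1) (a i) \<and> sa_term (i - 1) (b i) \<and>
        analytic_set (i - 1) (proj (i - 1) A) (a i) \<and>
        analytic_set (i - 1) (proj (i - 1) A) (b i) \<and>
        (\<forall>y\<in>proj (i - 1) A. a i y < b i y) \<and>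
        proj i A = {x. length x = i \<and> take (i - 1) x \<in> proj (i - 1) A \<and>
                       a i (take (i - 1) x) < x ! (i - 1) \<and> x ! (i - 1) < b i (take (i - 1) x)})"

definition asym_determined :: "real list set \<Rightarrow> (nat \<Rightarrow> real list \<Rightarrow> real) \<Rightarrow>
    (nat \<Rightarrow> real list \<Rightarrow> real) \<Rightarrow> nat \<Rightarrow> bool" where
  "asym_determined A a b i \<longleftrightarrow> (\<exists>C>0. \<forall>y\<in>proj (i - 1) A. b i y < C * a i y)"

definition monom :: "nat \<Rightarrow> real list \<Rightarrow> real list \<Rightarrow> real" where
  "monom k \<alpha> x = (\<Prod>i<k. (x ! i) powr (\<alpha> ! i))"

definition strong_unit :: "nat \<Rightarrow> real list set \<Rightarrow> (real list \<Rightarrow> real) \<Rightarrow> bool" where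
  "strong_unit k S u \<longleftrightarrow> (\<exists>(\<beta>::real list list) U.
     (\<forall>bj\<in>set \<beta>. length bj = k \<and> (\<forall>i<k. bj ! i \<in> \<rat>)) \<and>
     (let N = length \<beta>; \<phi> = (\<lambda>x. map (\<lambda>bj. monom k bj x) \<beta>) in
        (\<exists>M. \<forall>x\<in>S. \<forall>j<N. \<bar>\<phi> x ! j\<bar> \<le> M) \<and>
        analytic_set N (closure_n N (\<phi> ` S)) U \<and>
        ((\<forall>y\<in>closure_n N (\<phi> ` S). U y > 0) \<or> (\<forall>y\<in>closure_n N (\<phi> ` S). U y < 0)) \<and>
        (\<forall>x\<in>S. u x = U (\<phi> x))))"

text \<open>A single function is J-prepared on S (dimension k) with center 0 (indices in J are 1-based).\<close>
definition prepared_fun :: "nat set \<Rightarrow> nat \<Rightarrow> real list set \<Rightarrow> (real list \<Rightarrow> real) \<Rightarrow> bool" where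
  "prepared_fun J k S f \<longleftrightarrow> (\<forall>x\<in>S. f x = 0) \<or>
     (\<exists>\<alpha> u. length \<alpha> = k \<and> (\<forall>i<k. \<alpha> ! i \<in> \<rat>) \<and> (\<forall>i<k. Suc i \<notin> J \<longrightarrow> \<alpha> ! i = 0) \<and>
        strong_unit k S u \<and> (\<forall>x\<in>S. f x = monom k \<alpha> x * u x))"

fun prepared_cell :: "nat set \<Rightarrow> nat \<Rightarrow> real list set \<Rightarrow> (nat \<Rightarrow> real list \<Rightarrow> real) \<Rightarrow>
    (nat \<Rightarrow> real list \<Rightarrow> real) \<Rightarrow> bool" where
  "prepared_cell J 0 A a b = True"
| "prepared_cell J (Suc m) A a b \<longleftrightarrow>
     prepared_cell (J \<inter> {1..m}) m (proj m A) a b \<and>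
     (\<forall>f\<in>{a (Suc m), b (Suc m), (\<lambda>x. b (Suc m) x - a (Suc m) x)}.
        prepared_fun (J \<inter> {1..m}) m (proj m A) f) \<and>
     0 \<in> closure (a (Suc m) ` proj m A)"

definition prepared :: "nat \<Rightarrow> real list set \<Rightarrow> (nat \<Rightarrow> real list \<Rightarrow> real) \<Rightarrow>
    (nat \<Rightarrow> real list \<Rightarrow> real) \<Rightarrow> bool" where
  "prepared n A a b \<longleftrightarrow> prepared_cell {i\<in>{1..n}. \<not> asym_determined A a b i} n A a b"

end

theory Submission
  imports Defs
begin

text \<open>
  The sliver is built one coordinate at a time, for the projections Pi_1(A), ..., Pi_n(A).
  At a sliver point (t, t^s_1, ..., t^s_(k-1)) every monomial x^alpha equals t^L(s) with L
  affine in s. The strong units occurring in the prepared forms of the boundary functions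
  a = a_(k+1) and b = b_(k+1) are continuous and of constant sign on a compact set, hence bounded
  away from 0 and infinity; so on the sliver b is comparable to t^Lb(s), and a either vanishes or
  is comparable to t^La(s). Since a < b <= 1, both La and La - Lb are nonnegative on the whole
  box of exponents. An affine function that is nonnegative on a box and vanishes at its centre is
  constant, so La = 0 at the centre would bound a from below, contradicting that 0 is in the
  closure of the values of a, and La = Lb there would give b <= C a, contradicting that x_(k+1)
  is asymptotically undetermined. Thus max 0 Lb < La at the centre; choosing z in between,
  a smaller box around the centre and small t make t^z lie strictly between a and b, which
  extends the sliver by the coordinate t^z.
\<close>

subsection \<open>Continuity of analytic functions\<close>

definition continuous_at_n :: "nat \<Rightarrow> real list \<Rightarrow> (real list \<Rightarrow> real) \<Rightarrow> bool" where
  "continuous_at_n m y f \<longleftrightarrow> (\<forall>e>0. \<exists>\<delta>>0. \<forall>x\<in>box_nbhd m y \<delta>. \<bar>f x - f y\<bar> < e)"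

lemma power_series_abs_summable:
  fixes \<rho> :: real
  assumes "((\<lambda>\<alpha>. c \<alpha> * (\<Prod>i<m. \<rho> ^ (\<alpha> ! i))) has_sum s) A"
  shows "(\<lambda>\<alpha>. \<bar>c \<alpha>\<bar> * \<bar>\<rho>\<bar> ^ (\<Sum>i<m. \<alpha> ! i)) summable_on A"
proof -
  have "(\<lambda>\<alpha>. c \<alpha> * \<rho> ^ (\<Sum>i<m. \<alpha> ! i)) summable_on A"
    using assms by (auto simp: summable_on_def power_sum)
  then show ?thesis
    by (subst (asm) summable_on_iff_abs_summable_on_real) (simp add: abs_mult power_abs)
qed

lemma monomial_increment_bound:
  fixes x y :: "real list" and \<delta> \<rho> :: real and \<alpha> :: "nat list"
  assumes close: "\<And>i. i < m \<Longrightarrow> \<bar>x ! i - y ! i\<bar> \<le> \<delta>"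
    and \<delta>: "0 \<le> \<delta>" "\<delta> \<le> \<rho>" and \<rho>: "0 < \<rho>"
  shows "\<bar>(\<Prod>i<m. (x ! i - y ! i) ^ (\<alpha> ! i)) - (\<Prod>i<m. (y ! i - y ! i) ^ (\<alpha> ! i))\<bar>
           \<le> \<delta> / \<rho> * \<rho> ^ (\<Sum>i<m. \<alpha> ! i)"
proof (cases "\<forall>i<m. \<alpha> ! i = 0")
  case True
  then show ?thesis
    using \<delta> \<rho> by simp
next
  case False
  define q where "q = \<delta> / \<rho>"
  have q: "0 \<le> q" "q \<le> 1"
    using \<delta> \<rho> by (auto simp: q_def divide_le_eq_1)
  from False obtain j where j: "j < m" "\<alpha> ! j \<noteq> 0"
    by auto
  then have "\<alpha> ! j \<le> (\<Sum>i<m. \<alpha> ! i)"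
    by (intro member_le_sum) auto
  with j have deg: "1 \<le> (\<Sum>i<m. \<alpha> ! i)"
    by linarith
  have "\<bar>\<Prod>i<m. (x ! i - y ! i) ^ (\<alpha> ! i)\<bar> \<le> (\<Prod>i<m. \<delta> ^ (\<alpha> ! i))"
    unfolding abs_prod power_abs using close by (intro prod_mono) (auto intro: power_mono)
  also have "\<dots> = (q * \<rho>) ^ (\<Sum>i<m. \<alpha> ! i)"
    using \<rho> by (simp add: q_def power_sum)
  also have "\<dots> = q ^ (\<Sum>i<m. \<alpha> ! i) * \<rho> ^ (\<Sum>i<m. \<alpha> ! i)"
    by (rule power_mult_distrib)
  also have "\<dots> \<le> q * \<rho> ^ (\<Sum>i<m. \<alpha> ! i)"
    using q deg \<rho> by (intro mult_right_mono power_decreasing[of 1, simplified]) auto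
  finally have bound: "\<bar>\<Prod>i<m. (x ! i - y ! i) ^ (\<alpha> ! i)\<bar> \<le> q * \<rho> ^ (\<Sum>i<m. \<alpha> ! i)" .
  have zero: "(\<Prod>i<m. (y ! i - y ! i) ^ (\<alpha> ! i)) = 0"
    using j by (auto intro!: prod_zero)
  show ?thesis
    unfolding zero using bound by (simp add: q_def)
qed

lemma power_series_increment_bound:
  fixes c :: "nat list \<Rightarrow> real" and m :: nat and x y :: "real list" and \<rho> \<delta> :: real
  defines "B \<equiv> \<lambda>\<alpha>. \<bar>c \<alpha>\<bar> * \<rho> ^ (\<Sum>i<m. \<alpha> ! i)"
  assumes hx: "((\<lambda>\<alpha>. c \<alpha> * (\<Prod>i<m. (x ! i - y ! i) ^ (\<alpha> ! i))) has_sum g x) {\<alpha>. length \<alpha> = m}"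
    and hy: "((\<lambda>\<alpha>. c \<alpha> * (\<Prod>i<m. (y ! i - y ! i) ^ (\<alpha> ! i))) has_sum g y) {\<alpha>. length \<alpha> = m}"
    and B: "B summable_on {\<alpha>. length \<alpha> = m}"
    and close: "\<And>i. i < m \<Longrightarrow> \<bar>x ! i - y ! i\<bar> \<le> \<delta>"
    and \<delta>: "0 \<le> \<delta>" "\<delta> \<le> \<rho>" and \<rho>: "0 < \<rho>"
  shows "\<bar>g x - g y\<bar> \<le> \<delta> / \<rho> * infsum B {\<alpha>. length \<alpha> = m}"
proof -
  define \<Omega> where "\<Omega> = {\<alpha>::nat list. length \<alpha> = m}"
  define q where "q = \<delta> / \<rho>"
  have q: "0 \<le> q"
    using \<delta> \<rho> by (simp add: q_def)
  define D where
    "D \<alpha> = c \<alpha> * (\<Prod>i<m. (x ! i - y ! i) ^ (\<alpha> ! i)) - c \<alpha> * (\<Prod>i<m. (y ! i - y ! i) ^ (\<alpha> ! i))"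
    for \<alpha> :: "nat list"
  have hD: "(D has_sum (g x - g y)) \<Omega>"
    unfolding D_def \<Omega>_def using has_sum_add[OF hx has_sum_uminusI[OF hy]] by simp
  have D_le: "\<bar>D \<alpha>\<bar> \<le> q * B \<alpha>" for \<alpha>
    using mult_left_mono[OF monomial_increment_bound[OF close \<delta> \<rho>, where \<alpha> = \<alpha>] abs_ge_zero[of "c \<alpha>"]]
    by (simp add: D_def B_def q_def abs_mult mult_ac flip: right_diff_distrib)
  have qB: "(\<lambda>\<alpha>. q * B \<alpha>) summable_on \<Omega>"
    using B unfolding \<Omega>_def by (rule summable_on_cmult_right)
  have qB_norm: "norm (q * B \<alpha>) = q * B \<alpha>" for \<alpha>
    using q \<rho> by (simp add: B_def abs_mult)
  with qB have "(\<lambda>\<alpha>. norm (q * B \<alpha>)) summable_on \<Omega>"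
    by simp
  then have D_abs: "(\<lambda>\<alpha>. norm (D \<alpha>)) summable_on \<Omega>"
    by (rule Infinite_Sum.abs_summable_on_comparison_test) (metis D_le qB_norm real_norm_def)
  have "\<bar>g x - g y\<bar> = \<bar>infsum D \<Omega>\<bar>"
    using hD infsumI by metis
  also have "\<dots> \<le> infsum (\<lambda>\<alpha>. \<bar>D \<alpha>\<bar>) \<Omega>"
    using norm_infsum_bound[OF D_abs] by simp
  also have "\<dots> \<le> infsum (\<lambda>\<alpha>. q * B \<alpha>) \<Omega>"
    using D_abs D_le qB by (intro infsum_mono) auto
  also have "\<dots> = q * infsum B \<Omega>"
    by (rule infsum_cmult_right) (use B \<Omega>_def in auto)
  finally show ?thesis
    by (simp add: q_def \<Omega>_def)
qed

lemma analytic_on_n_increment_bound: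
  assumes an: "analytic_on_n m V g" and y: "y \<in> V"
  obtains \<rho> T where "0 < \<rho>" "0 \<le> T"
    "\<And>x \<delta>. x \<in> box_nbhd m y \<delta> \<Longrightarrow> 0 \<le> \<delta> \<Longrightarrow> \<delta> \<le> \<rho> \<Longrightarrow> \<bar>g x - g y\<bar> \<le> \<delta> / \<rho> * T"
proof -
  define \<Omega> where "\<Omega> = {\<alpha>::nat list. length \<alpha> = m}"
  obtain r c where r: "r > 0" and
    hs: "\<And>x. x \<in> box_nbhd m y r \<Longrightarrow>
       ((\<lambda>\<alpha>. c \<alpha> * (\<Prod>i<m. (x ! i - y ! i) ^ (\<alpha> ! i))) has_sum g x) \<Omega>"
    using an y unfolding analytic_on_n_def \<Omega>_def by blast
  have y_box: "y \<in> box_nbhd m y r"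
    using an y r unfolding analytic_on_n_def open_n_def by (auto simp: box_nbhd_def)
  define \<rho> where "\<rho> = r / 2"
  define B where "B \<alpha> = \<bar>c \<alpha>\<bar> * \<rho> ^ (\<Sum>i<m. \<alpha> ! i)" for \<alpha>
  \<comment> \<open>summability at the corner point y + (\<rho>, ..., \<rho>) of the box gives absolute convergence\<close>
  have "map (\<lambda>i. y ! i + \<rho>) [0..<m] \<in> box_nbhd m y r"
    using r by (simp add: box_nbhd_def \<rho>_def)
  from hs[OF this]
  have "((\<lambda>\<alpha>. c \<alpha> * (\<Prod>i<m. \<rho> ^ (\<alpha> ! i))) has_sum g (map (\<lambda>i. y ! i + \<rho>) [0..<m])) \<Omega>"
    by simp
  from power_series_abs_summable[OF this]
  have B: "B summable_on \<Omega>"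
    using r by (simp add: B_def[abs_def] \<rho>_def)
  show ?thesis
  proof (rule that)
    show "0 < \<rho>" "0 \<le> infsum B \<Omega>"
      using r by (auto simp: \<rho>_def B_def intro!: infsum_nonneg)
    fix x \<delta> assume x: "x \<in> box_nbhd m y \<delta>" and \<delta>: "0 \<le> \<delta>" "\<delta> \<le> \<rho>"
    then have x_box: "x \<in> box_nbhd m y r"
      using r by (force simp: box_nbhd_def \<rho>_def)
    show "\<bar>g x - g y\<bar> \<le> \<delta> / \<rho> * infsum B \<Omega>"
      unfolding B_def[abs_def] \<Omega>_def
      by (rule power_series_increment_bound[OF hs[OF x_box, unfolded \<Omega>_def] hs[OF y_box, unfolded \<Omega>_def]])
        (use B[unfolded B_def[abs_def] \<Omega>_def] x \<delta> r in \<open>auto simp: box_nbhd_def \<rho>_def less_imp_le\<close>)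
  qed
qed

lemma analytic_on_n_continuous_at_n:
  assumes an: "analytic_on_n m V g" and y: "y \<in> V"
  shows "continuous_at_n m y g"
  unfolding continuous_at_n_def
proof (intro allI impI)
  fix e :: real assume e: "e > 0"
  obtain \<rho> T where \<rho>: "0 < \<rho>" and T: "0 \<le> T" and
    bound: "\<And>x \<delta>. x \<in> box_nbhd m y \<delta> \<Longrightarrow> 0 \<le> \<delta> \<Longrightarrow> \<delta> \<le> \<rho> \<Longrightarrow> \<bar>g x - g y\<bar> \<le> \<delta> / \<rho> * T"
    using analytic_on_n_increment_bound[OF an y] by metis
  define \<delta> where "\<delta> = min \<rho> (e * \<rho> / (T + 1))"
  have \<delta>: "0 < \<delta>" "\<delta> \<le> \<rho>"
    using \<rho> e T by (simp_all add: \<delta>_def)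
  have "\<delta> / \<rho> \<le> e / (T + 1)"
    using \<rho> by (simp add: \<delta>_def pos_divide_le_eq)
  then have "\<delta> / \<rho> * T \<le> e / (T + 1) * T"
    using T by (rule mult_right_mono)
  also have "\<dots> < e"
    using e T by (simp add: divide_simps)
  finally have "\<delta> / \<rho> * T < e" .
  with bound \<delta> show "\<exists>\<delta>>0. \<forall>x\<in>box_nbhd m y \<delta>. \<bar>g x - g y\<bar> < e"
    by (meson less_imp_le order.strict_trans1)
qed

subsection \<open>Bounds for strong units\<close>

lemma subset_closure_n: "(\<And>y. y \<in> Y \<Longrightarrow> length y = N) \<Longrightarrow> Y \<subseteq> closure_n N Y"
  unfolding closure_n_def by force

lemma bounded_coords_convergent_subseq:
  fixes X :: "nat \<Rightarrow> real list"
  assumes "\<And>k i. i < N \<Longrightarrow> \<bar>X k ! i\<bar> \<le> M"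
  shows "\<exists>r. strict_mono r \<and> (\<forall>i<N. convergent (\<lambda>k. X (r k) ! i))"
  using assms
proof (induction N)
  case 0
  then show ?case
    by (intro exI[of _ id]) (auto simp: strict_mono_def)
next
  case (Suc N)
  have "\<And>k i. i < N \<Longrightarrow> \<bar>X k ! i\<bar> \<le> M"
    using Suc.prems by simp
  then obtain r1 where r1: "strict_mono r1" "\<forall>i<N. convergent (\<lambda>k. X (r1 k) ! i)"
    using Suc.IH by blast
  obtain r2 where r2: "strict_mono r2" "monoseq (\<lambda>k. X (r1 (r2 k)) ! N)"
    using seq_monosub[of "\<lambda>k. X (r1 k) ! N"] by auto
  have "Bseq (\<lambda>k. X (r1 (r2 k)) ! N)"
    using Suc.prems[of N] by (intro BseqI'[of _ M]) auto
  with r2(2) have last: "convergent (\<lambda>k. X (r1 (r2 k)) ! N)"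
    using Bseq_monoseq_convergent by blast
  have init: "convergent (\<lambda>k. X (r1 (r2 k)) ! i)" if "i < N" for i
    using convergent_subseq_convergent[OF r1(2)[rule_format, OF that] r2(1)] by (simp add: o_def)
  have "\<forall>i<Suc N. convergent (\<lambda>k. X ((r1 \<circ> r2) k) ! i)"
  proof (intro allI impI)
    fix i assume "i < Suc N"
    then consider "i < N" | "i = N"
      by linarith
    then show "convergent (\<lambda>k. X ((r1 \<circ> r2) k) ! i)"
      using init last by cases simp_all
  qed
  moreover have "strict_mono (r1 \<circ> r2)"
    using r1(1) r2(1) by (rule strict_mono_o)
  ultimately show ?case
    by blast
qed

lemma bounded_seq_subseq_tendsto_closure_n:
  fixes X :: "nat \<Rightarrow> real list"
  assumes Y: "\<And>y. y \<in> Y \<Longrightarrow> length y = N \<and> (\<forall>i<N. \<bar>y ! i\<bar> \<le> M)" and X: "\<And>k. X k \<in> Y"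
  shows "\<exists>r w. strict_mono r \<and> w \<in> closure_n N Y \<and>
           (\<forall>\<delta>>0. eventually (\<lambda>k. X (r k) \<in> box_nbhd N w \<delta>) sequentially)"
proof -
  obtain r where r: "strict_mono r" "\<forall>i<N. convergent (\<lambda>k. X (r k) ! i)"
    using bounded_coords_convergent_subseq[of N X M] Y X by blast
  define w where "w = map (\<lambda>i. lim (\<lambda>k. X (r k) ! i)) [0..<N]"
  have len: "length (X k) = N" for k
    using Y X by blast
  have ev: "eventually (\<lambda>k. X (r k) \<in> box_nbhd N w \<delta>) sequentially" if "\<delta> > 0" for \<delta>
  proof -
    have "(\<lambda>k. X (r k) ! i) \<longlonglongrightarrow> w ! i" if "i < N" for i
      using r(2) that by (simp add: w_def convergent_LIMSEQ_iff)
    then have "\<forall>i\<in>{..<N}. eventually (\<lambda>k. \<bar>X (r k) ! i - w ! i\<bar> < \<delta>) sequentially"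
      using \<open>\<delta> > 0\<close> by (auto simp: tendsto_iff dist_real_def)
    then have "eventually (\<lambda>k. \<forall>i\<in>{..<N}. \<bar>X (r k) ! i - w ! i\<bar> < \<delta>) sequentially"
      by (rule eventually_ball_finite[rotated]) simp
    then show ?thesis
      by (rule eventually_mono) (simp add: box_nbhd_def len)
  qed
  have "w \<in> closure_n N Y"
    unfolding closure_n_def
  proof (intro CollectI conjI allI impI)
    fix e :: real assume "e > 0"
    from ev[OF this] obtain k where "X (r k) \<in> box_nbhd N w e"
      unfolding eventually_sequentially by blast
    then show "\<exists>z\<in>Y. \<forall>i<N. \<bar>w ! i - z ! i\<bar> < e"
      using X by (intro bexI[of _ "X (r k)"]) (simp_all add: box_nbhd_def abs_minus_commute)
  qed (simp add: w_def)
  with r(1) ev show ?thesis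
    by blast
qed

lemma locally_bounded_imp_bounded_above:
  fixes f :: "real list \<Rightarrow> real"
  assumes Y: "\<And>y. y \<in> Y \<Longrightarrow> length y = N \<and> (\<forall>i<N. \<bar>y ! i\<bar> \<le> M)"
    and local: "\<And>w. w \<in> closure_n N Y \<Longrightarrow> \<exists>\<delta>>0. \<exists>C. \<forall>x\<in>box_nbhd N w \<delta>. f x \<le> C"
  shows "\<exists>C. \<forall>y\<in>Y. f y \<le> C"
proof (rule ccontr)
  assume unbounded: "\<not> ?thesis"
  have "\<forall>k::nat. \<exists>y. y \<in> Y \<and> real k < f y"
  proof
    fix k :: nat
    from unbounded have "\<not> (\<forall>y\<in>Y. f y \<le> real k)"
      by blast
    then show "\<exists>y. y \<in> Y \<and> real k < f y"
      using not_le by blast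
  qed
  from choice[OF this] obtain X where "\<forall>k. X k \<in> Y \<and> real k < f (X k)"
    by blast
  then have X: "\<And>k. X k \<in> Y" "\<And>k. real k < f (X k)"
    by auto
  obtain r w where r: "strict_mono r" and w: "w \<in> closure_n N Y"
    and conv: "\<forall>\<delta>>0. eventually (\<lambda>k. X (r k) \<in> box_nbhd N w \<delta>) sequentially"
    using bounded_seq_subseq_tendsto_closure_n[where X = X, OF Y X(1)] by blast
  obtain \<delta> C where \<delta>: "\<delta> > 0" and C: "\<And>x. x \<in> box_nbhd N w \<delta> \<Longrightarrow> f x \<le> C"
    using local[OF w] by blast
  obtain K :: nat where K: "C < real K"
    using reals_Archimedean2 by blast
  obtain k where "k \<ge> K" and k: "X (r k) \<in> box_nbhd N w \<delta>"
    using eventually_conj[OF eventually_ge_at_top[of K] conv[rule_format, OF \<delta>]]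
    unfolding eventually_sequentially by blast
  moreover have "k \<le> r k"
    using r by (rule seq_suble)
  ultimately have "real K \<le> real (r k)"
    by simp
  with C[OF k] X(2)[of "r k"] K show False
    by linarith
qed

lemma continuous_at_n_pos_nbhd:
  assumes cont: "continuous_at_n N w f" and pos: "0 < f w"
  shows "\<exists>\<delta>>0. \<forall>x\<in>box_nbhd N w \<delta>. f w / 2 < f x \<and> f x < f w + 1"
proof -
  have "0 < min (f w / 2) 1"
    using pos by simp
  with cont obtain \<delta>
    where \<delta>: "\<delta> > 0" "\<forall>x\<in>box_nbhd N w \<delta>. \<bar>f x - f w\<bar> < min (f w / 2) 1"
    unfolding continuous_at_n_def by blast
  show ?thesis
  proof (intro exI[of _ \<delta>] conjI ballI \<delta>(1))
    fix x assume "x \<in> box_nbhd N w \<delta>"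
    with \<delta>(2) have "\<bar>f x - f w\<bar> < f w / 2" "\<bar>f x - f w\<bar> < 1"
      by auto
    then show "f w / 2 < f x" "f x < f w + 1"
      unfolding abs_less_iff by linarith+
  qed
qed

lemma continuous_positive_bounds:
  fixes f :: "real list \<Rightarrow> real"
  assumes Y: "\<And>y. y \<in> Y \<Longrightarrow> length y = N \<and> (\<forall>i<N. \<bar>y ! i\<bar> \<le> M)"
    and cont: "\<And>w. w \<in> closure_n N Y \<Longrightarrow> continuous_at_n N w f"
    and pos: "\<And>w. w \<in> closure_n N Y \<Longrightarrow> f w > 0"
  shows "\<exists>c C. 0 < c \<and> (\<forall>y\<in>Y. c \<le> f y \<and> f y \<le> C)"
proof -
  have near: "\<exists>\<delta>>0. \<forall>x\<in>box_nbhd N w \<delta>. f w / 2 < f x \<and> f x < f w + 1"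
    if "w \<in> closure_n N Y" for w
    using continuous_at_n_pos_nbhd[OF cont[OF that] pos[OF that]] .
  have "\<exists>C. \<forall>y\<in>Y. f y \<le> C"
  proof (rule locally_bounded_imp_bounded_above[OF Y])
    fix w assume "w \<in> closure_n N Y"
    from near[OF this] obtain \<delta> where "\<delta> > 0" "\<forall>x\<in>box_nbhd N w \<delta>. f x < f w + 1"
      by blast
    then show "\<exists>\<delta>>0. \<exists>C. \<forall>x\<in>box_nbhd N w \<delta>. f x \<le> C"
      using less_imp_le by blast
  qed
  then obtain C where C: "\<forall>y\<in>Y. f y \<le> C" ..
  \<comment> \<open>a positive lower bound for f is obtained as an upper bound for 1 / f\<close>
  have "\<exists>D. \<forall>y\<in>Y. 1 / f y \<le> D"
  proof (rule locally_bounded_imp_bounded_above[OF Y])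
    fix w assume w: "w \<in> closure_n N Y"
    from near[OF w] obtain \<delta> where "\<delta> > 0" "\<forall>x\<in>box_nbhd N w \<delta>. f w / 2 < f x"
      by blast
    moreover have "1 / f x \<le> 2 / f w" if "f w / 2 < f x" for x
      using pos[OF w] that by (simp add: field_simps)
    ultimately show "\<exists>\<delta>>0. \<exists>C. \<forall>x\<in>box_nbhd N w \<delta>. 1 / f x \<le> C"
      by blast
  qed
  then obtain D where D: "\<forall>y\<in>Y. 1 / f y \<le> D" ..
  have "1 / (\<bar>D\<bar> + 1) \<le> f y" if "y \<in> Y" for y
  proof -
    have "0 < f y"
      using pos subset_closure_n[of Y N] Y that by blast
    moreover have "1 / f y \<le> \<bar>D\<bar> + 1"
      using D that by fastforce
    ultimately show ?thesis
      by (simp add: divide_le_eq mult.commute)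
  qed
  with C show ?thesis
    by (intro exI[of _ "1 / (\<bar>D\<bar> + 1)"] exI[of _ C]) auto
qed

lemma analytic_unit_bounds:
  assumes Y: "\<And>y. y \<in> Y \<Longrightarrow> length y = N \<and> (\<forall>i<N. \<bar>y ! i\<bar> \<le> M)"
    and an: "analytic_set N (closure_n N Y) U"
    and sign: "(\<forall>w\<in>closure_n N Y. 0 < U w) \<or> (\<forall>w\<in>closure_n N Y. U w < 0)"
  shows "\<exists>c C. 0 < c \<and> ((\<forall>y\<in>Y. c \<le> U y \<and> U y \<le> C) \<or> (\<forall>y\<in>Y. -C \<le> U y \<and> U y \<le> -c))"
proof -
  obtain V g where V: "closure_n N Y \<subseteq> V" "analytic_on_n N V g" "\<forall>x\<in>closure_n N Y. g x = U x"
    using an unfolding analytic_set_def by blast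
  have gU: "g y = U y" if "y \<in> Y" for y
    using V(3) subset_closure_n[of Y N] Y that by blast
  obtain \<sigma> :: real where \<sigma>: "\<sigma> = 1 \<or> \<sigma> = -1" "\<forall>w\<in>closure_n N Y. 0 < \<sigma> * g w"
  proof (cases "\<forall>w\<in>closure_n N Y. 0 < U w")
    case True
    with V(3) show ?thesis
      by (intro that[of 1]) auto
  next
    case False
    with sign V(3) show ?thesis
      by (intro that[of "-1"]) auto
  qed
  have cont: "continuous_at_n N w (\<lambda>x. \<sigma> * g x)" if "w \<in> closure_n N Y" for w
  proof -
    have "continuous_at_n N w g"
      using analytic_on_n_continuous_at_n[OF V(2)] V(1) that by blast
    moreover have "\<bar>\<sigma> * g x - \<sigma> * g w\<bar> = \<bar>g x - g w\<bar>" for x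
      using \<sigma>(1) by (auto simp flip: right_diff_distrib)
    ultimately show ?thesis
      unfolding continuous_at_n_def by simp
  qed
  have "\<exists>c C. 0 < c \<and> (\<forall>y\<in>Y. c \<le> \<sigma> * g y \<and> \<sigma> * g y \<le> C)"
    using \<sigma>(2) by (intro continuous_positive_bounds[OF Y cont]) auto
  then obtain c C where "0 < c" and cC: "\<forall>y\<in>Y. c \<le> \<sigma> * U y \<and> \<sigma> * U y \<le> C"
    using gU by auto
  from \<sigma>(1) show ?thesis
  proof
    assume "\<sigma> = -1"
    with cC have "\<forall>y\<in>Y. - C \<le> U y \<and> U y \<le> - c"
      by force
    with \<open>0 < c\<close> show ?thesis
      by blast
  qed (use cC \<open>0 < c\<close> in auto)
qed

lemma strong_unit_bounds:
  assumes "strong_unit k S u"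
  shows "\<exists>c C. 0 < c \<and> ((\<forall>x\<in>S. c \<le> u x \<and> u x \<le> C) \<or> (\<forall>x\<in>S. -C \<le> u x \<and> u x \<le> -c))"
proof -
  obtain \<beta> :: "real list list" and U M where
    M: "\<forall>x\<in>S. \<forall>j<length \<beta>. \<bar>map (\<lambda>bj. monom k bj x) \<beta> ! j\<bar> \<le> M" and
    an: "analytic_set (length \<beta>) (closure_n (length \<beta>) ((\<lambda>x. map (\<lambda>bj. monom k bj x) \<beta>) ` S)) U" and
    sign: "(\<forall>y\<in>closure_n (length \<beta>) ((\<lambda>x. map (\<lambda>bj. monom k bj x) \<beta>) ` S). U y > 0) \<or>
         (\<forall>y\<in>closure_n (length \<beta>) ((\<lambda>x. map (\<lambda>bj. monom k bj x) \<beta>) ` S). U y < 0)" and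
    u: "\<forall>x\<in>S. u x = U (map (\<lambda>bj. monom k bj x) \<beta>)"
    using assms unfolding strong_unit_def Let_def by blast
  have "\<And>y. y \<in> (\<lambda>x. map (\<lambda>bj. monom k bj x) \<beta>) ` S \<Longrightarrow>
      length y = length \<beta> \<and> (\<forall>i<length \<beta>. \<bar>y ! i\<bar> \<le> M)"
    using M by auto
  from analytic_unit_bounds[OF this an sign] u show ?thesis
    by auto
qed

definition comparable_monom ::
    "nat \<Rightarrow> real list set \<Rightarrow> (real list \<Rightarrow> real) \<Rightarrow> real list \<Rightarrow> real \<Rightarrow> real \<Rightarrow> bool" where
  "comparable_monom k S f \<alpha> c C \<longleftrightarrow> length \<alpha> = k \<and> 0 < c \<and>
     (\<forall>y\<in>S. c * monom k \<alpha> y \<le> f y \<and> f y \<le> C * monom k \<alpha> y)"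

lemma monom_pos: "(\<And>i. i < k \<Longrightarrow> 0 < x ! i) \<Longrightarrow> 0 < monom k \<alpha> x"
  unfolding monom_def by (rule prod_pos) (metis lessThan_iff order_less_irrefl powr_gt_zero)

lemma prepared_fun_nonneg_cases:
  assumes f: "prepared_fun J k S f" and S: "S \<noteq> {}" "\<forall>y\<in>S. \<forall>i<k. 0 < y ! i"
    and nonneg: "\<forall>y\<in>S. 0 \<le> f y"
  shows "(\<forall>y\<in>S. f y = 0) \<or> (\<exists>\<alpha> c C. comparable_monom k S f \<alpha> c C)"
proof (cases "\<forall>y\<in>S. f y = 0")
  case False
  then obtain \<alpha> u where \<alpha>: "length \<alpha> = k" and u: "strong_unit k S u"
    and fu: "\<forall>x\<in>S. f x = monom k \<alpha> x * u x"
    using f unfolding prepared_fun_def by blast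
  obtain c C where c: "0 < c"
    and cC: "(\<forall>x\<in>S. c \<le> u x \<and> u x \<le> C) \<or> (\<forall>x\<in>S. -C \<le> u x \<and> u x \<le> -c)"
    using strong_unit_bounds[OF u] by blast
  have monom_pos': "0 < monom k \<alpha> y" if "y \<in> S" for y
    using S(2) that by (intro monom_pos) auto
  obtain y0 where y0: "y0 \<in> S"
    using S(1) by blast
  have "\<not> (\<forall>x\<in>S. u x \<le> -c)"
  proof
    assume "\<forall>x\<in>S. u x \<le> -c"
    with y0 c have "monom k \<alpha> y0 * u y0 < 0"
      by (intro mult_pos_neg monom_pos'[OF y0]) force
    with y0 fu nonneg show False
      by force
  qed
  with cC have "\<forall>x\<in>S. c \<le> u x \<and> u x \<le> C"
    by blast
  then have "\<forall>y\<in>S. c * monom k \<alpha> y \<le> f y \<and> f y \<le> C * monom k \<alpha> y"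
    using fu monom_pos' by (simp add: mult.commute mult_right_mono)
  with \<alpha> c show ?thesis
    unfolding comparable_monom_def by blast
qed simp

lemma comparable_monom_le:
  assumes "comparable_monom k S f \<alpha> c C" and "y \<in> S" and "\<forall>i<k. 0 < y ! i"
  shows "c \<le> C"
proof -
  have "c * monom k \<alpha> y \<le> C * monom k \<alpha> y"
    using assms(1,2) unfolding comparable_monom_def by fastforce
  moreover have "0 < monom k \<alpha> y"
    using assms(3) by (intro monom_pos) auto
  ultimately show ?thesis
    by simp
qed

subsection \<open>Exponents along sliver points\<close>

definition sliver_point :: "real \<Rightarrow> real list \<Rightarrow> real list" where
  "sliver_point t s = t # map (\<lambda>c. t powr c) s"

definition curve_exponent :: "(nat \<Rightarrow> real) \<Rightarrow> real list \<Rightarrow> real" where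
  "curve_exponent g s = g 0 + (\<Sum>j<length s. g (Suc j) * s ! j)"

lemma monom_sliver_point:
  assumes t: "0 < t" and s: "length s = k - 1" and k: "1 \<le> k"
  shows "monom k \<alpha> (sliver_point t s) = t powr curve_exponent ((!) \<alpha>) s"
proof -
  obtain m where k: "k = Suc m"
    using k by (cases k) auto
  have "monom k \<alpha> (sliver_point t s) = t powr (\<alpha> ! 0) * (\<Prod>i<m. (t powr (s ! i)) powr (\<alpha> ! Suc i))"
    unfolding monom_def sliver_point_def k prod.lessThan_Suc_shift using s k by simp
  also have "(\<Prod>i<m. (t powr (s ! i)) powr (\<alpha> ! Suc i)) = t powr (\<Sum>i<m. \<alpha> ! Suc i * s ! i)"
    using t by (simp add: powr_powr mult.commute powr_sum)
  finally show ?thesis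
    unfolding curve_exponent_def using s k t by (simp add: powr_add)
qed

lemma curve_exponent_diff:
  "curve_exponent (\<lambda>i. f i - g i) s = curve_exponent f s - curve_exponent g s"
  unfolding curve_exponent_def by (simp add: left_diff_distrib sum_subtractf)

lemma curve_exponent_update:
  assumes "j < length s"
  shows "curve_exponent g (s[j := x]) = curve_exponent g s + g (Suc j) * (x - s ! j)"
proof -
  have "(\<Sum>i<length s. g (Suc i) * s[j := x] ! i)
      = (\<Sum>i<length s. g (Suc i) * s ! i + (if i = j then g (Suc j) * (x - s ! j) else 0))"
    by (intro sum.cong) (auto simp: nth_list_update algebra_simps)
  also have "\<dots> = (\<Sum>i<length s. g (Suc i) * s ! i) + g (Suc j) * (x - s ! j)"
    using assms by (simp add: sum.distrib)
  finally show ?thesis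
    unfolding curve_exponent_def by simp
qed

lemma curve_exponent_dist:
  assumes "length s = length s0" and "\<And>j. j < length s0 \<Longrightarrow> \<bar>s ! j - s0 ! j\<bar> \<le> r"
  shows "\<bar>curve_exponent g s - curve_exponent g s0\<bar> \<le> (\<Sum>j<length s0. \<bar>g (Suc j)\<bar>) * r"
proof -
  have "\<bar>curve_exponent g s - curve_exponent g s0\<bar> = \<bar>\<Sum>j<length s0. g (Suc j) * (s ! j - s0 ! j)\<bar>"
    unfolding curve_exponent_def using assms(1) by (simp add: sum_subtractf right_diff_distrib)
  also have "\<dots> \<le> (\<Sum>j<length s0. \<bar>g (Suc j)\<bar> * \<bar>s ! j - s0 ! j\<bar>)"
    by (rule order_trans[OF sum_abs]) (simp add: abs_mult)
  also have "\<dots> \<le> (\<Sum>j<length s0. \<bar>g (Suc j)\<bar> * r)"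
    using assms(2) by (intro sum_mono mult_left_mono) auto
  finally show ?thesis
    by (simp add: sum_distrib_right)
qed

text \<open>Entry j of s is the exponent of the coordinate x_(j+2) and lies between p (j + 2) and
  q (j + 2), following the indexing of the statement.\<close>
definition in_box :: "nat \<Rightarrow> (nat \<Rightarrow> real) \<Rightarrow> (nat \<Rightarrow> real) \<Rightarrow> real list \<Rightarrow> bool" where
  "in_box k p q s \<longleftrightarrow> length s = k - 1 \<and> (\<forall>j<k - 1. p (j + 2) < s ! j \<and> s ! j < q (j + 2))"

lemma curve_exponent_zero_at_interior_min:
  assumes s0: "in_box k p q s0" and nonneg: "\<And>s. in_box k p q s \<Longrightarrow> 0 \<le> curve_exponent g s"
    and zero: "curve_exponent g s0 = 0"
  shows "\<forall>i<k. g i = 0"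
proof -
  have len: "length s0 = k - 1"
    using s0 by (simp add: in_box_def)
  have slope: "g (Suc j) = 0" if j: "j < k - 1" for j
  proof -
    define h where "h = min (s0 ! j - p (j + 2)) (q (j + 2) - s0 ! j) / 2"
    have "p (j + 2) < s0 ! j" "s0 ! j < q (j + 2)"
      using s0 j by (auto simp: in_box_def)
    then have h: "0 < h" "p (j + 2) < s0 ! j - h" "s0 ! j + h < q (j + 2)"
      unfolding h_def by (auto simp: min_def field_simps)
    have step: "0 \<le> g (Suc j) * (x - s0 ! j)" if "\<bar>x - s0 ! j\<bar> \<le> h" for x
    proof -
      have "in_box k p q (s0[j := x])"
        using s0 j h that unfolding in_box_def by (auto simp: nth_list_update abs_le_iff)
      from nonneg[OF this] show ?thesis
        using curve_exponent_update[of j s0 g x] j len zero by simp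
    qed
    from step[of "s0 ! j + h"] step[of "s0 ! j - h"] h(1) have "g (Suc j) * h = 0"
      by simp
    with h(1) show ?thesis
      by simp
  qed
  then have "g 0 = 0"
    using zero len unfolding curve_exponent_def by simp
  show ?thesis
  proof (intro allI impI)
    fix i assume "i < k"
    with \<open>g 0 = 0\<close> slope show "g i = 0"
      by (cases i) auto
  qed
qed

lemma powr_bounded_imp_nonneg_exponent:
  fixes L M \<epsilon> :: real
  assumes \<epsilon>: "0 < \<epsilon>" and bound: "\<And>t. 0 < t \<Longrightarrow> t < \<epsilon> \<Longrightarrow> t powr L \<le> M"
  shows "0 \<le> L"
proof (rule ccontr)
  assume "\<not> 0 \<le> L"
  define E where "E = (\<bar>M\<bar> + 1) powr (1 / L)"
  define t where "t = min (\<epsilon> / 2) (E / 2)"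
  have E: "0 < E"
    by (simp add: E_def)
  have t: "0 < t" "t < \<epsilon>" "t < E"
    using \<epsilon> E by (auto simp: t_def)
  have "E powr L < t powr L"
    using \<open>\<not> 0 \<le> L\<close> t by (intro powr_less_mono2_neg) auto
  moreover have "E powr L = \<bar>M\<bar> + 1"
    using \<open>\<not> 0 \<le> L\<close> by (simp add: E_def powr_powr)
  ultimately show False
    using bound[OF t(1,2)] by linarith
qed

subsection \<open>Extending a sliver\<close>

definition sliver ::
    "real list set \<Rightarrow> nat \<Rightarrow> real \<Rightarrow> (nat \<Rightarrow> real) \<Rightarrow> (nat \<Rightarrow> real) \<Rightarrow> bool" where
  "sliver P k \<epsilon> p q \<longleftrightarrow> 0 < \<epsilon> \<and> \<epsilon> < 1 \<and> (\<forall>i\<in>{2..k}. 0 < p i \<and> p i < q i) \<and>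
     (\<forall>t s. 0 < t \<and> t < \<epsilon> \<and> in_box k p q s \<longrightarrow> sliver_point t s \<in> P)"

lemma in_box_midpoint:
  assumes "\<forall>i\<in>{2..k}. p i < q i"
  shows "in_box k p q (map (\<lambda>j. (p (j + 2) + q (j + 2)) / 2) [0..<k - 1])"
  using assms by (auto simp: in_box_def field_simps)

lemma in_box_snoc_imp:
  assumes k: "1 \<le> k" and box: "in_box (Suc k) p q (s @ [z])"
  shows "in_box k p q s \<and> p (k + 1) < z \<and> z < q (k + 1)"
proof -
  have len: "length s = k - 1"
    using box by (auto simp: in_box_def)
  have coord: "p (j + 2) < (s @ [z]) ! j \<and> (s @ [z]) ! j < q (j + 2)" if "j < k" for j
    using box that by (simp add: in_box_def)
  have "p (j + 2) < s ! j \<and> s ! j < q (j + 2)" if "j < k - 1" for j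
    using coord[of j] that len by (simp add: nth_append)
  moreover have "k - 1 + 2 = k + 1"
    using k by simp
  ultimately show ?thesis
    using coord[of "k - 1"] k len by (simp add: in_box_def nth_append)
qed

lemma sliver_point_snoc: "sliver_point t (s @ [z]) = sliver_point t s @ [t powr z]"
  by (simp add: sliver_point_def)

lemma sliver_nonempty:
  assumes "sliver S k \<epsilon> p q"
  shows "S \<noteq> {}"
proof -
  have "in_box k p q (map (\<lambda>j. (p (j + 2) + q (j + 2)) / 2) [0..<k - 1])"
    using assms by (intro in_box_midpoint) (simp add: sliver_def)
  with assms have "sliver_point (\<epsilon> / 2) (map (\<lambda>j. (p (j + 2) + q (j + 2)) / 2) [0..<k - 1]) \<in> S"
    by (simp add: sliver_def)
  then show ?thesis
    by blast
qed

lemma comparable_monom_on_sliver: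
  assumes "comparable_monom k S f \<alpha> c C" and "sliver S k \<epsilon> p q" and "1 \<le> k"
    and "0 < t" "t < \<epsilon>" "in_box k p q s"
  shows "c * t powr curve_exponent ((!) \<alpha>) s \<le> f (sliver_point t s) \<and>
         f (sliver_point t s) \<le> C * t powr curve_exponent ((!) \<alpha>) s"
proof -
  have "sliver_point t s \<in> S"
    using assms(2,4-6) by (simp add: sliver_def)
  with assms(1) have "c * monom k \<alpha> (sliver_point t s) \<le> f (sliver_point t s) \<and>
      f (sliver_point t s) \<le> C * monom k \<alpha> (sliver_point t s)"
    unfolding comparable_monom_def by blast
  moreover have "monom k \<alpha> (sliver_point t s) = t powr curve_exponent ((!) \<alpha>) s"
    using assms(3,4,6) by (intro monom_sliver_point) (simp_all add: in_box_def)
  ultimately show ?thesis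
    by simp
qed

lemma curve_exponent_continuous:
  assumes "0 < d"
  shows "\<exists>\<rho>>0. \<forall>s. length s = length s0 \<and> (\<forall>j<length s0. \<bar>s ! j - s0 ! j\<bar> \<le> \<rho>) \<longrightarrow>
           \<bar>curve_exponent g s - curve_exponent g s0\<bar> < d"
proof -
  define G where "G = (\<Sum>j<length s0. \<bar>g (Suc j)\<bar>)"
  have G: "0 \<le> G"
    by (simp add: G_def sum_nonneg)
  have lt: "G * (d / (G + 1)) < d"
    using G \<open>0 < d\<close> by (simp add: field_simps)
  show ?thesis
  proof (intro exI[of _ "d / (G + 1)"] conjI allI impI)
    show "0 < d / (G + 1)"
      using G \<open>0 < d\<close> by simp
    fix s assume "length s = length s0 \<and> (\<forall>j<length s0. \<bar>s ! j - s0 ! j\<bar> \<le> d / (G + 1))"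
    then have "\<bar>curve_exponent g s - curve_exponent g s0\<bar> \<le> G * (d / (G + 1))"
      unfolding G_def by (intro curve_exponent_dist) auto
    with lt show "\<bar>curve_exponent g s - curve_exponent g s0\<bar> < d"
      by linarith
  qed
qed

lemma powr_strictly_between:
  fixes t d z LA LB a b Ca cb :: real
  assumes t: "0 < t" "t < 1" and d: "0 < d" and small: "t powr d < cb" "Ca * t powr d < 1" "0 \<le> Ca"
    and gaps: "LB + d \<le> z" "z + d \<le> LA"
    and b: "cb * t powr LB \<le> b" and a: "a \<le> Ca * t powr LA"
  shows "a < t powr z \<and> t powr z < b"
proof
  have "t powr LA \<le> t powr (d + z)"
    using gaps t by (intro powr_mono') auto
  with a small(3) have "a \<le> Ca * t powr (d + z)"
    by (meson mult_left_mono order_trans)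
  also have "\<dots> = Ca * (t powr d * t powr z)"
    by (simp add: powr_add)
  also have "\<dots> < t powr z"
    using small(2) t by (simp add: mult.assoc[symmetric])
  finally show "a < t powr z" .
  have "t powr z \<le> t powr (d + LB)"
    using gaps(1) t by (intro powr_mono') auto
  also have "\<dots> = t powr d * t powr LB"
    by (simp add: powr_add)
  also have "\<dots> < cb * t powr LB"
    using small(1) t by simp
  finally show "t powr z < b"
    using b by linarith
qed

lemma comparable_exponent_pos:
  assumes k: "1 \<le> k" and sl: "sliver S k \<epsilon> p q" and pos: "\<forall>y\<in>S. \<forall>i<k. 0 < y ! i"
    and f: "comparable_monom k S f \<alpha> c C" and small: "\<forall>y\<in>S. f y < 1" and zero: "0 \<in> closure (f ` S)"
    and s0: "in_box k p q s0"
  shows "0 < curve_exponent ((!) \<alpha>) s0"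
proof (rule ccontr)
  assume not_pos: "\<not> ?thesis"
  have \<epsilon>: "0 < \<epsilon>" and c: "0 < c"
    using sl f by (simp_all add: sliver_def comparable_monom_def)
  have nonneg: "0 \<le> curve_exponent ((!) \<alpha>) s" if s: "in_box k p q s" for s
  proof (rule powr_bounded_imp_nonneg_exponent[OF \<epsilon>])
    fix t assume t: "0 < t" "t < \<epsilon>"
    then have "sliver_point t s \<in> S"
      using sl s by (simp add: sliver_def)
    with comparable_monom_on_sliver[OF f sl k t s] small
    have "c * t powr curve_exponent ((!) \<alpha>) s < 1"
      by fastforce
    with c show "t powr curve_exponent ((!) \<alpha>) s \<le> 1 / c"
      by (simp add: field_simps)
  qed
  with not_pos s0 have "curve_exponent ((!) \<alpha>) s0 = 0"
    by force
  with s0 nonneg have "\<forall>i<k. \<alpha> ! i = 0"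
    by (rule curve_exponent_zero_at_interior_min)
  have "monom k \<alpha> y = 1" if "y \<in> S" for y
  proof -
    have "y ! i \<noteq> 0" if "i < k" for i
      using pos \<open>y \<in> S\<close> that by fastforce
    with \<open>\<forall>i<k. \<alpha> ! i = 0\<close> show ?thesis
      by (simp add: monom_def)
  qed
  with f have ge: "c \<le> f y" if "y \<in> S" for y
    using that by (force simp: comparable_monom_def)
  obtain y where "y \<in> S" "dist (f y) 0 < c"
    using zero c unfolding closure_approachable by blast
  with ge show False
    by force
qed

lemma comparable_same_monom_imp_determined:
  assumes S: "S \<noteq> {}" and pos: "\<forall>y\<in>S. \<forall>i<k. 0 < y ! i"
    and f: "comparable_monom k S f \<alpha> cf Cf" and g: "comparable_monom k S g \<alpha> cg Cg"
    and lt: "\<forall>y\<in>S. f y < g y"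
  shows "\<exists>C>0. \<forall>y\<in>S. g y < C * f y"
proof -
  have cf: "0 < cf"
    using f by (simp add: comparable_monom_def)
  have bound: "g y \<le> Cg / cf * f y \<and> 0 < f y \<and> 0 \<le> Cg" if y: "y \<in> S" for y
  proof -
    have lower: "cf * monom k \<alpha> y \<le> f y" and upper: "g y \<le> Cg * monom k \<alpha> y"
      using f g y by (auto simp: comparable_monom_def)
    have monom: "0 < monom k \<alpha> y"
      using pos y by (intro monom_pos) auto
    have "0 < f y"
      using mult_pos_pos[OF cf monom] lower by linarith
    then have "0 < Cg * monom k \<alpha> y"
      using lt y upper by force
    then have "0 \<le> Cg"
      using monom by (simp add: zero_less_mult_iff)
    have "cf * g y \<le> cf * (Cg * monom k \<alpha> y)"
      using upper cf by simp
    also have "\<dots> = Cg * (cf * monom k \<alpha> y)"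
      by simp
    also have "\<dots> \<le> Cg * f y"
      using lower \<open>0 \<le> Cg\<close> by (rule mult_left_mono)
    finally show ?thesis
      using cf \<open>0 < f y\<close> \<open>0 \<le> Cg\<close> by (simp add: field_simps)
  qed
  obtain y0 where "y0 \<in> S"
    using S by blast
  with bound cf have "0 < Cg / cf + 1"
    by (simp add: add_nonneg_pos)
  moreover have "g y < (Cg / cf + 1) * f y" if "y \<in> S" for y
    using bound[OF that] by (simp add: distrib_right)
  ultimately show ?thesis
    by blast
qed

lemma comparable_exponent_gap:
  assumes k: "1 \<le> k" and sl: "sliver S k \<epsilon> p q" and pos: "\<forall>y\<in>S. \<forall>i<k. 0 < y ! i"
    and f: "comparable_monom k S f \<alpha> cf Cf" and g: "comparable_monom k S g \<beta> cg Cg"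
    and lt: "\<forall>y\<in>S. f y < g y" and undetermined: "\<not> (\<exists>C>0. \<forall>y\<in>S. g y < C * f y)"
    and s0: "in_box k p q s0"
  shows "curve_exponent ((!) \<beta>) s0 < curve_exponent ((!) \<alpha>) s0"
proof (rule ccontr)
  assume not_lt: "\<not> ?thesis"
  define D where "D i = \<alpha> ! i - \<beta> ! i" for i
  have \<epsilon>: "0 < \<epsilon>" and cf: "0 < cf"
    using sl f by (simp_all add: sliver_def comparable_monom_def)
  have nonneg: "0 \<le> curve_exponent D s" if s: "in_box k p q s" for s
  proof (rule powr_bounded_imp_nonneg_exponent[OF \<epsilon>])
    fix t assume t: "0 < t" "t < \<epsilon>"
    then have "sliver_point t s \<in> S"
      using sl s by (simp add: sliver_def)
    with comparable_monom_on_sliver[OF f sl k t s] comparable_monom_on_sliver[OF g sl k t s] lt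
    have "cf * t powr curve_exponent ((!) \<alpha>) s < Cg * t powr curve_exponent ((!) \<beta>) s"
      by fastforce
    moreover have "t powr curve_exponent ((!) \<alpha>) s
        = t powr curve_exponent D s * t powr curve_exponent ((!) \<beta>) s"
      by (simp add: D_def[abs_def] curve_exponent_diff flip: powr_add)
    moreover have "0 < t powr curve_exponent ((!) \<beta>) s"
      using t by simp
    ultimately have "cf * t powr curve_exponent D s < Cg"
      by (simp add: mult.assoc[symmetric])
    with cf show "t powr curve_exponent D s \<le> Cg / cf"
      by (simp add: field_simps)
  qed
  with not_lt s0 have "curve_exponent D s0 = 0"
    by (force simp: D_def[abs_def] curve_exponent_diff)
  with s0 nonneg have "\<forall>i<k. D i = 0"
    by (rule curve_exponent_zero_at_interior_min)
  with f g have "\<alpha> = \<beta>"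
    by (simp add: D_def comparable_monom_def list_eq_iff_nth_eq)
  with comparable_same_monom_imp_determined[OF sliver_nonempty[OF sl] pos f _ lt] g undetermined
  show False
    by blast
qed

lemma sliver_exponent_gap:
  assumes k: "1 \<le> k" and sl: "sliver S k \<epsilon> p q" and pos: "\<forall>y\<in>S. \<forall>i<k. 0 < y ! i"
    and ab: "\<forall>y\<in>S. 0 \<le> a y \<and> a y < b y \<and> b y \<le> 1"
    and pa: "prepared_fun J k S a" and pb: "prepared_fun J k S b"
    and zero: "0 \<in> closure (a ` S)" and undetermined: "\<not> (\<exists>C>0. \<forall>y\<in>S. b y < C * a y)"
    and s0: "in_box k p q s0"
  obtains cb Ca gb ga where "0 < cb" "0 \<le> Ca" "max 0 (curve_exponent gb s0) < curve_exponent ga s0"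
    "\<And>t s. 0 < t \<Longrightarrow> t < \<epsilon> \<Longrightarrow> in_box k p q s \<Longrightarrow>
       cb * t powr curve_exponent gb s \<le> b (sliver_point t s)"
    "\<And>t s. 0 < t \<Longrightarrow> t < \<epsilon> \<Longrightarrow> in_box k p q s \<Longrightarrow>
       a (sliver_point t s) \<le> Ca * t powr curve_exponent ga s"
proof -
  have ne: "S \<noteq> {}"
    using sl by (rule sliver_nonempty)
  then obtain y0 where y0: "y0 \<in> S"
    by blast
  have "\<not> (\<forall>y\<in>S. b y = 0)"
    using ab y0 by force
  with prepared_fun_nonneg_cases[OF pb ne pos] ab
  obtain \<beta> cb Cb where b: "comparable_monom k S b \<beta> cb Cb"
    by force
  then have cb: "0 < cb"
    by (simp add: comparable_monom_def)
  define LB where "LB = curve_exponent ((!) \<beta>) s0"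
  have b_lower: "cb * t powr curve_exponent ((!) \<beta>) s \<le> b (sliver_point t s)"
    if "0 < t" "t < \<epsilon>" "in_box k p q s" for t s
    using comparable_monom_on_sliver[OF b sl k that] by blast
  from prepared_fun_nonneg_cases[OF pa ne pos] ab consider
      "\<forall>y\<in>S. a y = 0" | \<alpha> ca Ca where "comparable_monom k S a \<alpha> ca Ca"
    by force
  then show ?thesis
  proof cases
    case 1
    define ga :: "nat \<Rightarrow> real" where "ga i = (if i = 0 then max 0 LB + 1 else 0)" for i
    have "a (sliver_point t s) \<le> 0 * t powr curve_exponent ga s"
      if "0 < t" "t < \<epsilon>" "in_box k p q s" for t s
      using 1 sl that by (simp add: sliver_def)
    moreover have "max 0 LB < curve_exponent ga s0"
      by (simp add: curve_exponent_def ga_def)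
    ultimately show ?thesis
      by (intro that[of cb 0 "(!) \<beta>" ga] cb b_lower) (simp_all add: LB_def)
  next
    case (2 \<alpha> ca Ca)
    have "0 < ca" "ca \<le> Ca"
      using 2 comparable_monom_le[OF 2 y0] pos y0 by (simp_all add: comparable_monom_def)
    then have "0 \<le> Ca"
      by linarith
    have "0 < curve_exponent ((!) \<alpha>) s0"
      using comparable_exponent_pos[OF k sl pos 2 _ zero s0] ab by force
    moreover have "LB < curve_exponent ((!) \<alpha>) s0"
      unfolding LB_def using ab
      by (intro comparable_exponent_gap[OF k sl pos 2 b _ undetermined s0]) auto
    moreover have "a (sliver_point t s) \<le> Ca * t powr curve_exponent ((!) \<alpha>) s"
      if "0 < t" "t < \<epsilon>" "in_box k p q s" for t s
      using comparable_monom_on_sliver[OF 2 sl k that] by blast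
    ultimately show ?thesis
      by (intro that[of cb Ca "(!) \<beta>" "(!) \<alpha>"] cb \<open>0 \<le> Ca\<close> b_lower) (simp_all add: LB_def)
  qed
qed

lemma in_box_fun_upd:
  "in_box k (p(Suc k := x)) (q(Suc k := y)) s \<longleftrightarrow> in_box k p q s"
proof -
  have "(p(Suc k := x)) (j + 2) = p (j + 2) \<and> (q(Suc k := y)) (j + 2) = q (j + 2)" if "j < k - 1" for j
    using that by auto
  then show ?thesis
    unfolding in_box_def by (metis (no_types, lifting))
qed

lemma in_box_shrink:
  assumes "in_box k (\<lambda>i. max (p i) (s0 ! (i - 2) - \<rho>)) (\<lambda>i. min (q i) (s0 ! (i - 2) + \<rho>)) s"
  shows "in_box k p q s \<and> (\<forall>j<k - 1. \<bar>s ! j - s0 ! j\<bar> \<le> \<rho>)"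
proof -
  have "p (j + 2) < s ! j \<and> s ! j < q (j + 2) \<and> \<bar>s ! j - s0 ! j\<bar> \<le> \<rho>" if "j < k - 1" for j
    using assms[unfolded in_box_def, THEN conjunct2, rule_format, OF that] by (simp add: abs_le_iff)
  with assms show ?thesis
    unfolding in_box_def by blast
qed

lemma in_box_shrink_nonempty:
  assumes s0: "in_box k p q s0" and p: "\<forall>i\<in>{2..k}. 0 < p i" and \<rho>: "0 < \<rho>"
  shows "\<forall>i\<in>{2..k}. 0 < max (p i) (s0 ! (i - 2) - \<rho>) \<and>
           max (p i) (s0 ! (i - 2) - \<rho>) < min (q i) (s0 ! (i - 2) + \<rho>)"
proof
  fix i assume i: "i \<in> {2..k}"
  then have "i - 2 < k - 1" "i - 2 + 2 = i"
    by auto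
  then have "p i < s0 ! (i - 2)" "s0 ! (i - 2) < q i"
    using s0 by (auto simp: in_box_def)
  moreover have "0 < p i"
    using p i by blast
  ultimately show "0 < max (p i) (s0 ! (i - 2) - \<rho>) \<and>
      max (p i) (s0 ! (i - 2) - \<rho>) < min (q i) (s0 ! (i - 2) + \<rho>)"
    using \<rho> by auto
qed

lemma small_powr_window:
  fixes d c C \<epsilon> :: real
  assumes d: "0 < d" and c: "0 < c" and C: "0 \<le> C" and \<epsilon>: "0 < \<epsilon>"
  shows "\<exists>\<epsilon>'. 0 < \<epsilon>' \<and> \<epsilon>' \<le> \<epsilon> \<and>
           (\<forall>t. 0 < t \<and> t < \<epsilon>' \<longrightarrow> t powr d < c \<and> C * t powr d < 1)"
proof -
  define m where "m = min c (1 / (C + 1))"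
  have m: "0 < m" "m \<le> c" "C * m < 1"
    using c C by (auto simp: m_def min_def field_simps)
  have "t powr d < c \<and> C * t powr d < 1" if t: "0 < t" "t < m powr (1 / d)" for t
  proof -
    have "t powr d < (m powr (1 / d)) powr d"
      using t d by (intro powr_less_mono2) auto
    also have "\<dots> = m"
      using d m(1) by (simp add: powr_powr)
    finally have "t powr d < m" .
    moreover from this have "C * t powr d \<le> C * m"
      using C by (simp add: mult_left_mono)
    ultimately show ?thesis
      using m by linarith
  qed
  with \<epsilon> m(1) show ?thesis
    by (intro exI[of _ "min \<epsilon> (m powr (1 / d))"]) auto
qed

lemma sliver_snoc_mem:
  assumes sl: "sliver S k \<epsilon> p q"
    and between: "\<And>y v. y \<in> S \<Longrightarrow> a y < v \<Longrightarrow> v < b y \<Longrightarrow> y @ [v] \<in> P"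
    and t: "0 < t" "t < \<epsilon>" and s: "in_box k p q s"
    and b_lower: "cb * t powr curve_exponent gb s \<le> b (sliver_point t s)"
    and a_upper: "a (sliver_point t s) \<le> Ca * t powr curve_exponent ga s"
    and d: "0 < d" and small: "t powr d < cb" "Ca * t powr d < 1" and Ca: "0 \<le> Ca"
    and gaps: "curve_exponent gb s + d \<le> z" "z + d \<le> curve_exponent ga s"
  shows "sliver_point t (s @ [z]) \<in> P"
proof -
  have "t < 1" "sliver_point t s \<in> S"
    using sl t s by (simp_all add: sliver_def)
  moreover from powr_strictly_between[OF t(1) \<open>t < 1\<close> d small Ca gaps b_lower a_upper]
  have "a (sliver_point t s) < t powr z" "t powr z < b (sliver_point t s)"
    by simp_all
  ultimately show ?thesis
    using between by (simp add: sliver_point_snoc)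
qed

lemma sliver_extend:
  assumes k: "1 \<le> k" and sl: "sliver S k \<epsilon> p q"
    and between: "\<And>y v. y \<in> S \<Longrightarrow> a y < v \<Longrightarrow> v < b y \<Longrightarrow> y @ [v] \<in> P"
    and cb: "0 < cb" and Ca: "0 \<le> Ca" and s0: "in_box k p q s0"
    and gap: "max 0 (curve_exponent gb s0) < curve_exponent ga s0"
    and b_lower: "\<And>t s. 0 < t \<Longrightarrow> t < \<epsilon> \<Longrightarrow> in_box k p q s \<Longrightarrow>
                    cb * t powr curve_exponent gb s \<le> b (sliver_point t s)"
    and a_upper: "\<And>t s. 0 < t \<Longrightarrow> t < \<epsilon> \<Longrightarrow> in_box k p q s \<Longrightarrow>
                    a (sliver_point t s) \<le> Ca * t powr curve_exponent ga s"
  shows "\<exists>\<epsilon>' p' q'. sliver P (Suc k) \<epsilon>' p' q'"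
proof -
  define lo where "lo = max 0 (curve_exponent gb s0)"
  define hi where "hi = curve_exponent ga s0"
  define d where "d = (hi - lo) / 8"
  have d: "0 < d" "0 \<le> lo" "hi - lo = 8 * d"
    using gap by (simp_all add: d_def lo_def hi_def)
  obtain \<rho>a where \<rho>a: "0 < \<rho>a" "\<forall>s. length s = length s0 \<and> (\<forall>j<length s0. \<bar>s ! j - s0 ! j\<bar> \<le> \<rho>a)
      \<longrightarrow> \<bar>curve_exponent ga s - hi\<bar> < d"
    using curve_exponent_continuous[OF d(1)] unfolding hi_def by blast
  obtain \<rho>b where \<rho>b: "0 < \<rho>b" "\<forall>s. length s = length s0 \<and> (\<forall>j<length s0. \<bar>s ! j - s0 ! j\<bar> \<le> \<rho>b)
      \<longrightarrow> \<bar>curve_exponent gb s - curve_exponent gb s0\<bar> < d"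
    using curve_exponent_continuous[OF d(1)] by blast
  define \<rho> where "\<rho> = min \<rho>a \<rho>b"
  define p' where "p' = (\<lambda>i. max (p i) (s0 ! (i - 2) - \<rho>))(Suc k := lo + 2 * d)"
  define q' where "q' = (\<lambda>i. min (q i) (s0 ! (i - 2) + \<rho>))(Suc k := hi - 2 * d)"
  have "0 < \<epsilon>"
    using sl by (simp add: sliver_def)
  from small_powr_window[OF d(1) cb Ca this] obtain \<epsilon>' where \<epsilon>': "0 < \<epsilon>'" "\<epsilon>' \<le> \<epsilon>" and
    small: "\<forall>t. 0 < t \<and> t < \<epsilon>' \<longrightarrow> t powr d < cb \<and> Ca * t powr d < 1"
    by blast
  have box': "\<forall>i\<in>{2..Suc k}. 0 < p' i \<and> p' i < q' i"
    using in_box_shrink_nonempty[OF s0 _, of \<rho>] sl \<rho>a(1) \<rho>b(1) d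
    by (auto simp: p'_def q'_def \<rho>_def sliver_def le_Suc_eq)
  have "sliver_point t (s @ [z]) \<in> P"
    if t: "0 < t" "t < \<epsilon>'" and box: "in_box (Suc k) p' q' (s @ [z])" for t s z
  proof -
    from in_box_snoc_imp[OF k box] have "in_box k p' q' s" and z: "lo + 2 * d < z" "z < hi - 2 * d"
      by (simp_all add: p'_def q'_def)
    then have s: "in_box k p q s" and "\<forall>j<k - 1. \<bar>s ! j - s0 ! j\<bar> \<le> \<rho>"
      using in_box_shrink[of k p s0 \<rho> q s] by (simp_all add: p'_def q'_def in_box_fun_upd)
    then have "\<bar>curve_exponent ga s - hi\<bar> < d" "\<bar>curve_exponent gb s - curve_exponent gb s0\<bar> < d"
      using \<rho>a(2) \<rho>b(2) s0 by (auto simp: in_box_def \<rho>_def)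
    then have gaps: "curve_exponent gb s + d \<le> z" "z + d \<le> curve_exponent ga s"
      using z by (auto simp: lo_def)
    have t\<epsilon>: "t < \<epsilon>"
      using t \<epsilon>' by simp
    from small t have "t powr d < cb" "Ca * t powr d < 1"
      by auto
    from sliver_snoc_mem[where a = a and b = b, OF sl between t(1) t\<epsilon> s
        b_lower[OF t(1) t\<epsilon> s] a_upper[OF t(1) t\<epsilon> s] d(1) this Ca gaps]
    show ?thesis .
  qed
  then have "sliver_point t sn \<in> P" if "0 < t" "t < \<epsilon>'" "in_box (Suc k) p' q' sn" for t sn
    using that k by (cases sn rule: rev_exhaust) (auto simp: in_box_def)
  moreover have "\<epsilon>' < 1"
    using \<epsilon>' sl by (simp add: sliver_def)
  ultimately show ?thesis
    using \<epsilon>' box' unfolding sliver_def by blast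
qed

lemma sliver_step:
  assumes k: "1 \<le> k" and sl: "sliver S k \<epsilon> p q" and pos: "\<forall>y\<in>S. \<forall>i<k. 0 < y ! i"
    and between: "\<And>y v. y \<in> S \<Longrightarrow> a y < v \<Longrightarrow> v < b y \<Longrightarrow> y @ [v] \<in> P"
    and ab: "\<forall>y\<in>S. 0 \<le> a y \<and> a y < b y \<and> b y \<le> 1"
    and pa: "prepared_fun J k S a" and pb: "prepared_fun J k S b"
    and zero: "0 \<in> closure (a ` S)" and undetermined: "\<not> (\<exists>C>0. \<forall>y\<in>S. b y < C * a y)"
  shows "\<exists>\<epsilon>' p' q'. sliver P (Suc k) \<epsilon>' p' q'"
proof -
  define s0 where "s0 = map (\<lambda>j. (p (j + 2) + q (j + 2)) / 2) [0..<k - 1]"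
  have s0: "in_box k p q s0"
    unfolding s0_def using sl by (intro in_box_midpoint) (simp add: sliver_def)
  show ?thesis
  proof (rule sliver_exponent_gap[OF k sl pos ab pa pb zero undetermined s0])
    fix cb Ca gb ga
    assume "0 < cb" "0 \<le> Ca" "max 0 (curve_exponent gb s0) < curve_exponent ga s0"
      "\<And>t s. 0 < t \<Longrightarrow> t < \<epsilon> \<Longrightarrow> in_box k p q s \<Longrightarrow>
         cb * t powr curve_exponent gb s \<le> b (sliver_point t s)"
      "\<And>t s. 0 < t \<Longrightarrow> t < \<epsilon> \<Longrightarrow> in_box k p q s \<Longrightarrow>
         a (sliver_point t s) \<le> Ca * t powr curve_exponent ga s"
    from sliver_extend[OF k sl between this(1,2) s0 this(3-5)] show ?thesis .
  qed
qed

subsection \<open>Open cells\<close>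

lemma open_sa_cell_coords:
  "open_sa_cell n A a b \<Longrightarrow> x \<in> A \<Longrightarrow> length x = n \<and> (\<forall>i<n. 0 < x ! i \<and> x ! i < 1)"
  unfolding open_sa_cell_def by blast

lemma proj_open_sa_cell_coords:
  assumes "open_sa_cell n A a b" "i \<le> n" "y \<in> proj i A"
  shows "length y = i \<and> (\<forall>j<i. 0 < y ! j \<and> y ! j < 1)"
proof -
  obtain x where "x \<in> A" "y = take i x"
    using assms(3) unfolding proj_def by blast
  then show ?thesis
    using open_sa_cell_coords[OF assms(1)] assms(2) by auto
qed

lemma proj_0_open_sa_cell: "open_sa_cell n A a b \<Longrightarrow> proj 0 A = {[]}"
  unfolding proj_def open_sa_cell_def by fastforce

lemma proj_dim_open_sa_cell:
  assumes "open_sa_cell n A a b"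
  shows "proj n A = A"
proof -
  have "take n x = x" if "x \<in> A" for x
    using open_sa_cell_coords[OF assms that] by simp
  then show ?thesis
    unfolding proj_def by force
qed

lemma snoc_mem_proj_open_sa_cell:
  assumes cell: "open_sa_cell n A a b" and i: "1 \<le> i" "i \<le> n" and y: "y \<in> proj (i - 1) A"
    and v: "a i y < v" "v < b i y"
  shows "y @ [v] \<in> proj i A"
proof -
  have "proj i A = {x. length x = i \<and> take (i - 1) x \<in> proj (i - 1) A \<and>
        a i (take (i - 1) x) < x ! (i - 1) \<and> x ! (i - 1) < b i (take (i - 1) x)}"
    using cell i unfolding open_sa_cell_def by auto
  moreover have "length y = i - 1"
    using proj_open_sa_cell_coords[OF cell _ y] i by simp
  ultimately show ?thesis
    using i y v by (simp add: nth_append)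
qed

lemma open_sa_cell_bounds_unit_interval:
  assumes cell: "open_sa_cell n A a b" and i: "1 \<le> i" "i \<le> n" and y: "y \<in> proj (i - 1) A"
  shows "0 \<le> a i y \<and> a i y < b i y \<and> b i y \<le> 1"
proof -
  have ab: "a i y < b i y"
    using cell i y unfolding open_sa_cell_def by auto
  have unit: "0 < v \<and> v < 1" if "a i y < v" "v < b i y" for v
  proof -
    have "y @ [v] \<in> proj i A"
      using snoc_mem_proj_open_sa_cell[OF cell i y that] .
    with proj_open_sa_cell_coords[OF cell i(2)]
    have "\<forall>j<i. 0 < (y @ [v]) ! j \<and> (y @ [v]) ! j < 1"
      by blast
    then have "0 < (y @ [v]) ! (i - 1) \<and> (y @ [v]) ! (i - 1) < 1"
      using i by simp
    moreover have "length y = i - 1"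
      using proj_open_sa_cell_coords[OF cell _ y] i by simp
    ultimately show ?thesis
      by (simp add: nth_append)
  qed
  \<comment> \<open>every point strictly between the bounds lies in (0,1), so the bounds lie in [0,1]\<close>
  have "0 \<le> a i y"
    using unit[of "a i y / 2"] unit[of "(a i y + b i y) / 2"] ab by (cases "a i y < 0") auto
  moreover have "b i y \<le> 1"
  proof (rule ccontr)
    assume "\<not> b i y \<le> 1"
    define v where "v = (max (a i y) 1 + b i y) / 2"
    have "a i y < v" "v < b i y" "1 < v"
      using ab \<open>\<not> b i y \<le> 1\<close> by (auto simp: v_def max_def)
    with unit show False
      by fastforce
  qed
  ultimately show ?thesis
    using ab by blast
qed

lemma proj_proj: "i \<le> m \<Longrightarrow> proj i (proj m A) = proj i A"
  unfolding proj_def by (simp add: image_image min_absorb1)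

lemma prepared_cell_boundary:
  assumes "prepared_cell J n A a b" "1 \<le> i" "i \<le> n"
  shows "\<exists>J'. prepared_fun J' (i - 1) (proj (i - 1) A) (a i) \<and>
    prepared_fun J' (i - 1) (proj (i - 1) A) (b i) \<and> 0 \<in> closure (a i ` proj (i - 1) A)"
  using assms
proof (induction n arbitrary: J A)
  case (Suc m)
  show ?case
  proof (cases "i = Suc m")
    case True
    then show ?thesis
      using Suc.prems(1) by auto
  next
    case False
    then have "i \<le> m"
      using Suc.prems by simp
    moreover have "prepared_cell (J \<inter> {1..m}) m (proj m A) a b"
      using Suc.prems(1) by simp
    ultimately show ?thesis
      using Suc.IH[of _ "proj m A"] Suc.prems(2) proj_proj[of "i - 1" m A] by auto
  qed
qed simp

lemma sliver_proj_1:
  assumes cell: "open_sa_cell n A a b" and n: "1 \<le> n" and undetermined: "\<not> asym_determined A a b 1"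
  shows "\<exists>\<epsilon> p q. sliver (proj 1 A) 1 \<epsilon> p q"
proof -
  have proj0: "proj (1 - 1) A = {[]}"
    using proj_0_open_sa_cell[OF cell] by simp
  then have ab: "0 \<le> a 1 [] \<and> a 1 [] < b 1 [] \<and> b 1 [] \<le> 1"
    using open_sa_cell_bounds_unit_interval[OF cell order.refl n] by simp
  have "a 1 [] = 0"
  proof (rule ccontr)
    assume "a 1 [] \<noteq> 0"
    with ab have "b 1 [] < (b 1 [] / a 1 [] + 1) * a 1 []" "0 < b 1 [] / a 1 [] + 1"
      by (simp_all add: distrib_right add_pos_pos)
    with undetermined proj0 show False
      unfolding asym_determined_def by auto
  qed
  define \<epsilon> where "\<epsilon> = min (b 1 []) (1 / 2)"
  have "sliver (proj 1 A) 1 \<epsilon> (\<lambda>_. 1) (\<lambda>_. 2)"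
    unfolding sliver_def
  proof (intro conjI allI impI)
    show "0 < \<epsilon>" "\<epsilon> < 1"
      using ab \<open>a 1 [] = 0\<close> by (auto simp: \<epsilon>_def)
    fix t s assume ts: "0 < t \<and> t < \<epsilon> \<and> in_box 1 (\<lambda>_. 1) (\<lambda>_. 2) s"
    then have "s = []"
      by (simp add: in_box_def)
    have "[] @ [t] \<in> proj 1 A"
      using snoc_mem_proj_open_sa_cell[OF cell order.refl n] proj0 ts \<open>a 1 [] = 0\<close>
      by (simp add: \<epsilon>_def)
    with \<open>s = []\<close> show "sliver_point t s \<in> proj 1 A"
      by (simp add: sliver_point_def)
  qed simp
  then show ?thesis
    by blast
qed

lemma sliver_proj:
  assumes cell: "open_sa_cell n A a b" and prep: "prepared n A a b"
    and undetermined: "\<forall>i\<in>{1..n}. \<not> asym_determined A a b i"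
    and k: "1 \<le> k" "k \<le> n"
  shows "\<exists>\<epsilon> p q. sliver (proj k A) k \<epsilon> p q"
  using k
proof (induction k rule: nat_induct_at_least)
  case base
  then show ?case
    using sliver_proj_1[OF cell] undetermined by simp
next
  case (Suc k)
  then obtain \<epsilon> p q where sl: "sliver (proj k A) k \<epsilon> p q"
    by auto
  obtain J where J: "prepared_fun J k (proj k A) (a (Suc k))" "prepared_fun J k (proj k A) (b (Suc k))"
    "0 \<in> closure (a (Suc k) ` proj k A)"
    using prepared_cell_boundary[OF prep[unfolded prepared_def], of "Suc k"] Suc.prems by auto
  have i: "1 \<le> Suc k" "Suc k \<le> n"
    using Suc by simp_all
  show ?case
  proof (rule sliver_step[OF Suc.hyps sl _ _ _ J])
    have "k \<le> n"
      using i by simp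
    then show "\<forall>y\<in>proj k A. \<forall>i<k. 0 < y ! i"
      using proj_open_sa_cell_coords[OF cell] by blast
    show "y @ [v] \<in> proj (Suc k) A" if "y \<in> proj k A" "a (Suc k) y < v" "v < b (Suc k) y" for y v
      using snoc_mem_proj_open_sa_cell[OF cell i] that by simp
    show "\<forall>y\<in>proj k A. 0 \<le> a (Suc k) y \<and> a (Suc k) y < b (Suc k) y \<and> b (Suc k) y \<le> 1"
      using open_sa_cell_bounds_unit_interval[OF cell i] by simp
    have "\<not> asym_determined A a b (Suc k)"
      using undetermined i by simp
    then show "\<not> (\<exists>C>0. \<forall>y\<in>proj k A. b (Suc k) y < C * a (Suc k) y)"
      unfolding asym_determined_def by simp
  qed
qed

theorem proposition4p5:
  fixes n :: nat and A :: "real list set" and a b :: "nat \<Rightarrow> real list \<Rightarrow> real"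
  assumes "n \<ge> 1"
    and "open_sa_cell n A a b"
    and "prepared n A a b"
    and "\<forall>i\<in>{1..n}. \<not> asym_determined A a b i"
  shows "\<exists>\<epsilon> p q. 0 < \<epsilon> \<and> \<epsilon> < 1 \<and> (\<forall>i\<in>{2..n}. 0 < p i \<and> p i < q i) \<and>
           (\<forall>t1 s. 0 < t1 \<and> t1 < \<epsilon> \<and> length s = n - 1 \<and>
                   (\<forall>j<n - 1. p (j + 2) < s ! j \<and> s ! j < q (j + 2)) \<longrightarrow>
                   t1 # map (\<lambda>c. t1 powr c) s \<in> A)"
proof -
  obtain \<epsilon> p q where "sliver (proj n A) n \<epsilon> p q"
    using sliver_proj[OF assms(2-4) assms(1) order.refl] by blast
  then show ?thesis
    unfolding sliver_def in_box_def sliver_point_def proj_dim_open_sa_cell[OF assms(2)] by blast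
qed

end
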